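(* Let $\mathcal{G}_1$ be an $r_1$-regular graph on $n_1$ vertices and $\mathcal{G}_2$ an $r_2$-regular graph on $n_2$ vertices. Let $\mu_{11},\mu_{12},\ldots,\mu_{1n_1}$ be the Laplacian eigenvalues of $\mathcal{G}_1$. Then the Laplacian characteristic polynomial of $\mathcal{G}_1\circledast\mathcal{G}_2$ satisfies $$f(L_{\mathcal{G}_1\circledast \mathcal{G}_2},x)=(x-r_1n_2-n_2)^{n_1(n_2-1)}\, f(L_{\mathcal{G}_2},x-n_2)^{n_1}\cdot \prod_{i=1}^{n_1}\big[x-n_2-n_2\mu_{1i}-n_2\chi_{L_{\mathcal{G}_2}}(x-n_2)\big].$$
   Context: All graphs are simple, finite and undirected. For a graph $\mathcal{G}$ with adjacency matrix $A_{\mathcal{G}}$ and diagonal degree matrix $D_{\mathcal{G}}$, the Laplacian matrix is $L_{\mathcal{G}}=D_{\mathcal{G}}-A_{\mathcal{G}}$. For a square matrix $M$ of order $n$, $f(M,x)=\det(xI_n-M)$ is its characteristic polynomial. The Laplacian coronal of a graph $\mathcal{G}$ on $n$ vertices is the rational function $\chi_{L_{\mathcal{G}}}(x)=\mathbf{1}_n^T(xI_n-L_{\mathcal{G}})^{-1}\mathbf{1}_n$, where $\mathbf{1}_n$ is the all-ones column vector. The graph product $\mathcal{G}_1\circledast\mathcal{G}_2$ of $\mathcal{G}_1$ (vertices $u_1,\ldots,u_{n_1}$) and $\mathcal{G}_2$ (vertices $v_1,\ldots,v_{n_2}$) has vertex set $\{a_{ik},b_{ik}:1\le i\le n_1,1\le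 k\le n_2\}$ ($2n_1n_2$ vertices) and edges: (1) $a_{ik}a_{jl}$ for all $1\le k,l\le n_2$ whenever $u_iu_j\in E(\mathcal{G}_1)$; (2) $b_{ri}b_{rj}$ for all $1\le r\le n_1$ whenever $v_iv_j\in E(\mathcal{G}_2)$; (3) $a_{ip}b_{iq}$ for all $1\le i\le n_1$ and $1\le p,q\le n_2$. The identity is an identity of rational functions in $x$. *)

theory Defs
  imports "HOL-Analysis.Analysis"
begin

definition simple_graph :: "('v \<Rightarrow> 'v \<Rightarrow> bool) \<Rightarrow> bool" where
  "simple_graph E \<longleftrightarrow> (\<forall>u v. E u v \<longrightarrow> E v u) \<and> (\<forall>v. \<not> E v v)"

definition degree :: "('v \<Rightarrow> 'v \<Rightarrow> bool) \<Rightarrow> 'v \<Rightarrow> nat" where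
  "degree E v = card {w. E v w}"

definition regular :: "('v \<Rightarrow> 'v \<Rightarrow> bool) \<Rightarrow> nat \<Rightarrow> bool" where
  "regular E r \<longleftrightarrow> (\<forall>v. degree E v = r)"

definition laplacian :: "('v::finite \<Rightarrow> 'v \<Rightarrow> bool) \<Rightarrow> real^'v^'v" where
  "laplacian E = (\<chi> i j. (if i = j then real (degree E i) else 0) - (if E i j then 1 else 0))"

definition charpoly :: "real^'n^'n \<Rightarrow> real \<Rightarrow> real" where
  "charpoly M x = det (mat x - M)"

text \<open>Coronal 1^T (xI - M)^{-1} 1 (meaningful where xI - M is invertible).\<close>
definition coronal :: "real^'n^'n \<Rightarrow> real \<Rightarrow> real" where
  "coronal M x = (\<Sum>i\<in>UNIV. \<Sum>j\<in>UNIV. matrix_inv (mat x - M) $ i $ j)"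

text \<open>The product G1 \<circledast> G2 on vertices Inl (i,k) = a_ik and Inr (i,k) = b_ik.\<close>
fun prod_graph :: "('a \<Rightarrow> 'a \<Rightarrow> bool) \<Rightarrow> ('b \<Rightarrow> 'b \<Rightarrow> bool)
    \<Rightarrow> ('a \<times> 'b) + ('a \<times> 'b) \<Rightarrow> ('a \<times> 'b) + ('a \<times> 'b) \<Rightarrow> bool" where
  "prod_graph E1 E2 (Inl (i, k)) (Inl (j, l)) = E1 i j"
| "prod_graph E1 E2 (Inr (r, i)) (Inr (s, j)) = (r = s \<and> E2 i j)"
| "prod_graph E1 E2 (Inl (i, p)) (Inr (j, q)) = (i = j)"
| "prod_graph E1 E2 (Inr (j, q)) (Inl (i, p)) = (i = j)"

end

theory Submission
  imports Defs
begin

(* Order the vertices as a_ik before b_ik. Then xI - L is a 2 x 2 block matrix: its lower right block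
   is I \<otimes> M with M = (x - n2) I - L2, and both off-diagonal blocks are P P^T, where P is the
   incidence matrix of the projection (i, k) \<mapsto> i. Since P^T (I \<otimes> M^-1) P is the coronal \<chi> of L2
   at x - n2 times the identity, the Schur complement of I \<otimes> M is cI + P (A1 - \<chi> I) P^T with
   c = x - r1 n2 - n2. Sylvester's identity det (cI + UV) = c^(m - n) det (cI + VU) together with
   P^T P = n2 I turns this into an n1 x n1 determinant, a shifted characteristic polynomial of
   L1 = r1 I - A1. *)

section \<open>Determinants and inverses\<close>

lemma matrix_matrix_mult_nth: "(X ** Y) $ i $ j = (\<Sum>k\<in>UNIV. X $ i $ k * Y $ k $ j)"
  by (simp add: matrix_matrix_mult_def)

lemma sum_UNIV_Plus:
  "(\<Sum>z\<in>(UNIV::('u::finite + 'w::finite) set). g z) = (\<Sum>i\<in>UNIV. g (Inl i)) + (\<Sum>j\<in>UNIV. g (Inr j))"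
  by (subst UNIV_Plus_UNIV[symmetric], subst sum.Plus) (auto simp: o_def)

lemma sum_UNIV_Times:
  "(\<Sum>z\<in>(UNIV::('a::finite \<times> 'b::finite) set). g z) = (\<Sum>i\<in>UNIV. \<Sum>k\<in>UNIV. g (i, k))"
  by (subst UNIV_Times_UNIV[symmetric], subst sum.cartesian_product) (simp add: case_prod_beta)

lemma transpose_zero: "transpose 0 = 0"
  by (simp add: transpose_def vec_eq_iff)

lemma mat_matrix_mult: "mat c ** (M::real^'n^'m) = c *\<^sub>R M"
  unfolding matrix_matrix_mult_def mat_def
  by (auto simp: vec_eq_iff if_distrib if_distribR sum.delta'[OF finite] cong: if_cong)

lemma matrix_mult_mat: "(M::real^'n^'m) ** mat c = c *\<^sub>R M"
  unfolding matrix_matrix_mult_def mat_def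
  by (auto simp: vec_eq_iff if_distrib if_distribR sum.delta'[OF finite] mult.commute cong: if_cong)

lemma uminus_matrix_mult: "(- U) ** (V::real^'n^'m) = - (U ** V)"
  by (simp add: matrix_matrix_mult_def vec_eq_iff sum_negf)

lemma matrix_mult_uminus: "U ** (- V::real^'n^'m) = - (U ** V)"
  by (simp add: matrix_matrix_mult_def vec_eq_iff sum_negf)

lemma det_mat: "det (mat c :: real^'n^'n) = c ^ CARD('n)"
  by (subst det_diagonal) (simp_all add: mat_def)

lemma matrix_inv_mult:
  assumes "invertible D"
  shows "D ** matrix_inv D = mat 1" "matrix_inv D ** D = mat 1"
proof -
  have "\<exists>D'. D ** D' = mat 1 \<and> D' ** D = mat 1"
    using assms by (simp add: invertible_def)
  then have "D ** matrix_inv D = mat 1 \<and> matrix_inv D ** D = mat 1"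
    unfolding matrix_inv_def by (rule someI_ex)
  then show "D ** matrix_inv D = mat 1" "matrix_inv D ** D = mat 1"
    by auto
qed

lemma matrix_inv_unique:
  fixes A :: "'a::comm_ring_1^'n^'n"
  assumes "A ** B = mat 1" "B ** A = mat 1"
  shows "matrix_inv A = B"
proof -
  have "invertible A"
    using assms unfolding invertible_def by blast
  have "matrix_inv A = (B ** A) ** matrix_inv A"
    using assms by simp
  also have "\<dots> = B"
    by (simp flip: matrix_mul_assoc add: matrix_inv_mult[OF \<open>invertible A\<close>])
  finally show ?thesis .
qed

lemma matrix_inv_mat:
  assumes "c \<noteq> 0"
  shows "invertible (mat c :: real^'n^'n)" "matrix_inv (mat c :: real^'n^'n) = mat (1 / c)"
proof -
  have "mat c ** mat (1 / c) = (mat 1 :: real^'n^'n)" "mat (1 / c) ** mat c = (mat 1 :: real^'n^'n)"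
    using assms unfolding mat_matrix_mult by (simp_all add: vec_eq_iff mat_def)
  then show "invertible (mat c :: real^'n^'n)" "matrix_inv (mat c :: real^'n^'n) = mat (1 / c)"
    unfolding invertible_def by (auto intro: matrix_inv_unique)
qed

lemma det_eq_prod_diagonal:
  fixes M :: "real^'n^'n"
  assumes "\<And>p. p permutes UNIV \<Longrightarrow> \<forall>x. M $ x $ p x \<noteq> 0 \<Longrightarrow> p = id"
  shows "det M = (\<Prod>x\<in>UNIV. M $ x $ x)"
proof -
  have "det M = (\<Sum>p\<in>{id}. of_int (sign p) * (\<Prod>i\<in>UNIV. M $ i $ p i))"
    unfolding det_def
  proof (rule sum.mono_neutral_right)
    show "\<forall>p\<in>{p. p permutes UNIV} - {id}. of_int (sign p) * (\<Prod>i\<in>UNIV. M $ i $ p i) = 0"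
    proof
      fix p :: "'n \<Rightarrow> 'n"
      assume "p \<in> {p. p permutes UNIV} - {id}"
      then obtain x where "M $ x $ p x = 0"
        using assms by blast
      then have "(\<Prod>i\<in>UNIV. M $ i $ p i) = 0"
        by (intro prod_zero) auto
      then show "of_int (sign p) * (\<Prod>i\<in>UNIV. M $ i $ p i) = 0"
        by simp
    qed
  qed (simp_all add: finite_permutations permutes_id)
  then show ?thesis
    by simp
qed

definition extend_by_id :: "('w \<Rightarrow> 'v) \<Rightarrow> real^'w^'w \<Rightarrow> real^'v^'v" where
  "extend_by_id f S = (\<chi> x y. if x \<in> range f \<and> y \<in> range f then S $ inv f x $ inv f y
     else if x = y then 1 else 0)"

lemma det_extend_by_id:
  fixes f :: "'w::finite \<Rightarrow> 'v::finite"
  assumes f: "inj f"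
  shows "det (extend_by_id f S) = det S"
proof -
  let ?M = "extend_by_id f S" and ?g = "map_permutation UNIV f"
  have M_nth: "?M $ x $ y = (if x \<in> range f \<and> y \<in> range f then S $ inv f x $ inv f y
      else if x = y then 1 else 0)" for x y
    by (simp add: extend_by_id_def)
  have g_apply: "?g q y = (if y \<in> range f then f (q (inv f y)) else y)" for q y
    by (simp add: map_permutation_def restrict_id_def)
  have "det ?M = (\<Sum>p\<in>{p. p permutes range f}. of_int (sign p) * (\<Prod>i\<in>UNIV. ?M $ i $ p i))"
    unfolding det_def
  proof (rule sum.mono_neutral_right)
    show "\<forall>p\<in>{p. p permutes UNIV} - {p. p permutes range f}.
        of_int (sign p) * (\<Prod>i\<in>UNIV. ?M $ i $ p i) = 0"
    proof
      fix p
      assume "p \<in> {p. p permutes UNIV} - {p. p permutes range f}"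
      then obtain x where "x \<notin> range f" "p x \<noteq> x"
        by (auto simp: permutes_def)
      then have "(\<Prod>i\<in>UNIV. ?M $ i $ p i) = 0"
        by (intro prod_zero) (auto simp: M_nth intro!: bexI[of _ x])
      then show "of_int (sign p) * (\<Prod>i\<in>UNIV. ?M $ i $ p i) = 0"
        by simp
    qed
  qed (auto intro: permutes_subset finite_permutations)
  also have "\<dots> = (\<Sum>q\<in>{q. q permutes UNIV}. of_int (sign (?g q)) * (\<Prod>i\<in>UNIV. ?M $ i $ ?g q i))"
  proof (rule sum.reindex_bij_betw[symmetric])
    have "bij_betw f UNIV (range f)"
      using f by (simp add: bij_betw_imageI)
    from bij_betw_permutations[OF this] show "bij_betw ?g {q. q permutes UNIV} {p. p permutes range f}"
      by (simp add: g_apply[abs_def])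
  qed
  also have "\<dots> = (\<Sum>q\<in>{q. q permutes UNIV}. of_int (sign q) * (\<Prod>w\<in>UNIV. S $ w $ q w))"
  proof (rule sum.cong[OF refl])
    fix q :: "'w \<Rightarrow> 'w"
    assume "q \<in> {q. q permutes UNIV}"
    then have sign_g: "sign (?g q) = sign q"
      using sign_map_permutation[of f UNIV q] f by simp
    have "(\<Prod>i\<in>UNIV. ?M $ i $ ?g q i) = (\<Prod>i\<in>range f. ?M $ i $ ?g q i)"
      by (rule prod.mono_neutral_right) (auto simp: g_apply M_nth)
    also have "\<dots> = (\<Prod>w\<in>UNIV. S $ w $ q w)"
      using f by (simp add: prod.reindex g_apply M_nth)
    finally show "of_int (sign (?g q)) * (\<Prod>i\<in>UNIV. ?M $ i $ ?g q i)
        = of_int (sign q) * (\<Prod>w\<in>UNIV. S $ w $ q w)"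
      by (simp add: sign_g)
  qed
  also have "\<dots> = det S"
    by (simp add: det_def)
  finally show ?thesis .
qed

section \<open>Block matrices and Schur complements\<close>

definition block_mat ::
    "real^'u^'u \<Rightarrow> real^'w^'u \<Rightarrow> real^'u^'w \<Rightarrow> real^'w^'w \<Rightarrow> real^('u + 'w)^('u + 'w)" where
  "block_mat A B C D = (\<chi> x y. case x of
       Inl i \<Rightarrow> (case y of Inl j \<Rightarrow> A $ i $ j | Inr j \<Rightarrow> B $ i $ j)
     | Inr i \<Rightarrow> (case y of Inl j \<Rightarrow> C $ i $ j | Inr j \<Rightarrow> D $ i $ j))"

lemma block_mat_nth [simp]:
  "block_mat A B C D $ Inl i $ Inl j = A $ i $ j" "block_mat A B C D $ Inl i $ Inr j' = B $ i $ j'"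
  "block_mat A B C D $ Inr i' $ Inl j = C $ i' $ j" "block_mat A B C D $ Inr i' $ Inr j' = D $ i' $ j'"
  by (simp_all add: block_mat_def)

lemma block_mat_eqI:
  assumes "\<And>i j. M $ Inl i $ Inl j = A $ i $ j" "\<And>i j. M $ Inl i $ Inr j = B $ i $ j"
    "\<And>i j. M $ Inr i $ Inl j = C $ i $ j" "\<And>i j. M $ Inr i $ Inr j = D $ i $ j"
  shows "M = block_mat A B C D"
  unfolding vec_eq_iff
proof (intro allI)
  fix x y
  show "M $ x $ y = block_mat A B C D $ x $ y"
    by (cases x; cases y) (simp_all add: assms)
qed

lemma block_mat_mult:
  "block_mat A B C D ** block_mat A' B' C' D' =
     block_mat (A ** A' + B ** C') (A ** B' + B ** D') (C ** A' + D ** C') (C ** B' + D ** D')"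
  by (rule block_mat_eqI) (simp_all only: matrix_matrix_mult_nth sum_UNIV_Plus block_mat_nth vector_add_component)

lemma transpose_block_mat:
  "transpose (block_mat A B C D) = block_mat (transpose A) (transpose C) (transpose B) (transpose D)"
  by (rule block_mat_eqI) (auto simp: transpose_def)

lemma det_block_mat_upper_unitriangular: "det (block_mat (mat 1) X 0 (mat 1)) = 1"
proof -
  let ?M = "block_mat (mat 1) X 0 (mat 1)"
  have "det ?M = (\<Prod>x\<in>UNIV. ?M $ x $ x)"
  proof (rule det_eq_prod_diagonal)
    fix p :: "'a + 'b \<Rightarrow> 'a + 'b"
    assume p: "p permutes UNIV" and nz: "\<forall>x. ?M $ x $ p x \<noteq> 0"
    have fix_Inr: "p (Inr j) = Inr j" for j
      using nz[rule_format, of "Inr j"] by (cases "p (Inr j)") (auto simp: mat_def split: if_splits)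
    have fix_Inl: "p (Inl i) = Inl i" for i
    proof (cases "p (Inl i)")
      case (Inl a)
      then show ?thesis
        using nz[rule_format, of "Inl i"] by (auto simp: mat_def split: if_splits)
    next
      case (Inr b)
      then have "p (Inl i) = p (Inr b)"
        using fix_Inr by simp
      then show ?thesis
        using permutes_inj[OF p] by (auto dest: injD)
    qed
    show "p = id"
    proof
      fix x
      show "p x = id x"
        by (cases x) (simp_all add: fix_Inl fix_Inr)
    qed
  qed
  also have "\<dots> = 1"
  proof (rule prod.neutral, rule ballI)
    fix x :: "'a + 'b"
    show "?M $ x $ x = 1"
      by (cases x) (simp_all add: mat_def)
  qed
  finally show ?thesis .
qed

lemma det_block_mat_lower_unitriangular: "det (block_mat (mat 1) 0 Y (mat 1)) = 1"
proof -
  have "det (block_mat (mat 1) 0 Y (mat 1)) = det (transpose (block_mat (mat 1) 0 Y (mat 1)))"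
    by simp
  also have "\<dots> = det (block_mat (mat 1) (transpose Y) 0 (mat 1))"
    by (simp add: transpose_block_mat transpose_zero)
  finally show ?thesis
    by (simp add: det_block_mat_upper_unitriangular)
qed

lemma det_block_mat_diagonal: "det (block_mat A 0 0 D) = det A * det D"
proof -
  have "block_mat A 0 0 D = block_mat A 0 0 (mat 1) ** block_mat (mat 1) 0 0 D"
    by (simp add: block_mat_mult)
  also have "\<dots> = extend_by_id Inl A ** extend_by_id Inr D"
    by (rule arg_cong2[where f = "(**)"]; rule sym, rule block_mat_eqI; auto simp: extend_by_id_def mat_def)
  finally show ?thesis
    by (simp add: det_mul det_extend_by_id)
qed

lemma det_block_mat_Schur_D:
  assumes "invertible D"
  shows "det (block_mat A B C D) = det D * det (A - B ** matrix_inv D ** C)"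
proof -
  define S where "S = A - B ** matrix_inv D ** C"
  have "B ** matrix_inv D ** D = B" "D ** matrix_inv D ** C = C"
    by (simp_all flip: matrix_mul_assoc add: matrix_inv_mult[OF assms])
  then have "block_mat A B C D
      = block_mat (mat 1) (B ** matrix_inv D) 0 (mat 1) ** block_mat S 0 0 D
        ** block_mat (mat 1) 0 (matrix_inv D ** C) (mat 1)"
    by (simp add: block_mat_mult matrix_mul_assoc S_def)
  then show ?thesis
    by (simp add: det_mul det_block_mat_upper_unitriangular det_block_mat_lower_unitriangular
        det_block_mat_diagonal S_def)
qed

lemma det_block_mat_Schur_A:
  assumes "invertible A"
  shows "det (block_mat A B C D) = det A * det (D - C ** matrix_inv A ** B)"
proof -
  define T where "T = D - C ** matrix_inv A ** B"
  have "C ** matrix_inv A ** A = C" "A ** matrix_inv A ** B = B"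
    by (simp_all flip: matrix_mul_assoc add: matrix_inv_mult[OF assms])
  then have "block_mat A B C D
      = block_mat (mat 1) 0 (C ** matrix_inv A) (mat 1) ** block_mat A 0 0 T
        ** block_mat (mat 1) (matrix_inv A ** B) 0 (mat 1)"
    by (simp add: block_mat_mult matrix_mul_assoc T_def)
  then show ?thesis
    by (simp add: det_mul det_block_mat_upper_unitriangular det_block_mat_lower_unitriangular
        det_block_mat_diagonal T_def)
qed

section \<open>Sylvester's determinant identity\<close>

lemma Sylvester_det_identity_nonzero:
  fixes U :: "real^'n^'m" and V :: "real^'m^'n"
  assumes c: "c \<noteq> 0"
  shows "det (mat c + U ** V) * c ^ CARD('n) = c ^ CARD('m) * det (mat c + V ** U)"
proof -
  let ?X = "block_mat (mat c) (- U) V (mat 1)"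
  have "det ?X = det (mat c + U ** V)"
    using det_block_mat_Schur_D[of "mat 1" "mat c" "- U" V] matrix_inv_mat[of 1, where 'n = 'n]
    by (simp add: uminus_matrix_mult)
  moreover have "det ?X = c ^ CARD('m) * det (mat 1 + (1 / c) *\<^sub>R (V ** U))"
    using det_block_mat_Schur_A[of "mat c" "- U" V "mat 1"] matrix_inv_mat[OF c, where 'n = 'm]
    by (simp add: det_mat matrix_mult_mat matrix_mult_uminus flip: scalar_matrix_assoc)
  moreover have "mat c + V ** U = mat c ** (mat 1 + (1 / c) *\<^sub>R (V ** U))"
    using c unfolding mat_matrix_mult by (simp add: vec_eq_iff mat_def algebra_simps)
  ultimately show ?thesis
    by (simp add: det_mul det_mat)
qed

lemma continuous_on_det_mat_plus: "continuous_on UNIV (\<lambda>c::real. det (mat c + (W::real^'n^'n)))"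
proof -
  have if_cont: "continuous_on UNIV (\<lambda>c::real. if b then c else 0)" for b
    by (cases b) (simp_all add: continuous_on_id)
  show ?thesis
    unfolding det_def by (simp add: mat_def) (intro continuous_intros if_cont)
qed

lemma Sylvester_det_identity:
  fixes U :: "real^'n^'m" and V :: "real^'m^'n"
  assumes "CARD('n) \<le> CARD('m)"
  shows "det (mat c + U ** V) = c ^ (CARD('m) - CARD('n)) * det (mat c + V ** U)"
proof -
  define F where "F c = det (mat c + U ** V)" for c
  define G where "G c = c ^ (CARD('m) - CARD('n)) * det (mat c + V ** U)" for c :: real
  have F_eq_G: "F c = G c" if "c \<noteq> 0" for c
  proof -
    have "c ^ CARD('m) = c ^ (CARD('m) - CARD('n)) * c ^ CARD('n)"
      using assms by (simp flip: power_add)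
    then have "F c * c ^ CARD('n) = G c * c ^ CARD('n)"
      using Sylvester_det_identity_nonzero[OF that, of U V] by (simp add: F_def G_def)
    then show ?thesis
      using that by simp
  qed
  have "continuous_on UNIV F" "continuous_on UNIV G"
    unfolding F_def[abs_def] G_def[abs_def] by (intro continuous_intros continuous_on_det_mat_plus)+
  then have "isCont F 0" "isCont G 0"
    by (simp_all add: continuous_on_eq_continuous_at)
  moreover have "eventually (\<lambda>c. G c = F c) (at 0)"
    unfolding eventually_at by (rule exI[of _ 1]) (auto simp: F_eq_G)
  ultimately have "(F \<longlongrightarrow> F 0) (at 0)" "(F \<longlongrightarrow> G 0) (at 0)"
    unfolding isCont_def by (auto dest: tendsto_cong)
  then have "F 0 = G 0"
    by (intro tendsto_unique[of "at (0::real)"]) auto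
  then show ?thesis
    using F_eq_G by (cases "c = 0") (simp_all add: F_def G_def)
qed

section \<open>Block-diagonal matrices and the projection onto the first factor\<close>

definition block_diag :: "('a::finite \<Rightarrow> real^'b::finite^'b) \<Rightarrow> real^('a \<times> 'b)^('a \<times> 'b)" where
  "block_diag M = (\<chi> p q. if fst p = fst q then M (fst p) $ snd p $ snd q else 0)"

lemma block_diag_mult: "block_diag X ** block_diag Y = block_diag (\<lambda>a. X a ** Y a)"
proof -
  have "(block_diag X ** block_diag Y) $ (a, k) $ (b, l)
      = (\<Sum>c\<in>UNIV. if c = a then (\<Sum>m\<in>UNIV. X a $ k $ m * (if a = b then Y a $ m $ l else 0)) else 0)"
    for a b k l
    unfolding matrix_matrix_mult_nth sum_UNIV_Times by (rule sum.cong) (auto simp: block_diag_def cong: if_cong)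
  then show ?thesis
    by (simp add: vec_eq_iff prod_eq_iff block_diag_def matrix_matrix_mult_nth)
qed

lemma block_diag_mat_1: "block_diag (\<lambda>_. mat 1) = mat 1"
  by (auto simp: vec_eq_iff block_diag_def mat_def prod_eq_iff)

lemma matrix_inv_block_diag:
  assumes "\<And>a. invertible (M a)"
  shows "matrix_inv (block_diag M) = block_diag (\<lambda>a. matrix_inv (M a))"
  by (rule matrix_inv_unique) (simp_all add: block_diag_mult matrix_inv_mult[OF assms] block_diag_mat_1)

lemma det_block_diag_single: "det (block_diag (\<lambda>b. if b = a then M else mat 1)) = det M"
proof -
  have inj: "inj (Pair a)"
    by (rule injI) simp
  have "block_diag (\<lambda>b. if b = a then M else mat 1) = extend_by_id (Pair a) M"
    by (auto simp: vec_eq_iff block_diag_def extend_by_id_def mat_def image_iff prod_eq_iff inv_f_f[OF inj])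
  then show ?thesis
    using det_extend_by_id[OF inj] by simp
qed

lemma det_block_diag: "det (block_diag M) = (\<Prod>a\<in>UNIV. det (M a))"
proof -
  have "det (block_diag (\<lambda>b. if b \<in> F then M b else mat 1)) = (\<Prod>a\<in>F. det (M a))" if "finite F" for F
    using that
  proof (induction F rule: finite_induct)
    case empty
    then show ?case
      by (simp add: block_diag_mat_1)
  next
    case (insert a F)
    have "(\<lambda>b. if b \<in> insert a F then M b else mat 1)
        = (\<lambda>b. (if b = a then M a else mat 1) ** (if b \<in> F then M b else mat 1))"
      using insert.hyps(2) by (auto simp: fun_eq_iff)
    then have "block_diag (\<lambda>b. if b \<in> insert a F then M b else mat 1)
        = block_diag (\<lambda>b. if b = a then M a else mat 1) ** block_diag (\<lambda>b. if b \<in> F then M b else mat 1)"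
      by (simp add: block_diag_mult)
    then show ?case
      using insert by (simp add: det_mul det_block_diag_single)
  qed
  from this[of UNIV] show ?thesis
    by simp
qed

definition fst_incidence :: "real^'a::finite^('a \<times> 'b::finite)" where
  "fst_incidence = (\<chi> p i. if fst p = i then 1 else 0)"

lemma fst_incidence_nth: "fst_incidence $ p $ i = (if fst p = i then 1 else 0)"
  by (simp add: fst_incidence_def)

lemma fst_incidence_conj_nth:
  "(fst_incidence ** X ** transpose fst_incidence) $ p $ q = X $ fst p $ fst q"
  by (simp add: matrix_matrix_mult_nth fst_incidence_nth transpose_def if_distrib if_distribR
      cong: if_cong)

lemma transpose_fst_incidence_mult:
  "transpose fst_incidence ** (fst_incidence :: real^'a::finite^('a \<times> 'b::finite)) = mat (real CARD('b))"
proof -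
  have "(transpose fst_incidence ** (fst_incidence :: real^'a^('a \<times> 'b))) $ i $ j
      = (\<Sum>a\<in>UNIV. if a = i then (if i = j then real CARD('b) else 0) else 0)" for i j
    unfolding matrix_matrix_mult_nth sum_UNIV_Times
    by (intro sum.cong refl) (simp add: fst_incidence_nth transpose_def)
  then show ?thesis
    by (simp add: vec_eq_iff mat_def)
qed

lemma transpose_fst_incidence_block_diag_const:
  "transpose fst_incidence ** block_diag (\<lambda>_. M) ** (fst_incidence :: real^'a::finite^('a \<times> 'b::finite))
     = mat (\<Sum>k\<in>UNIV. \<Sum>l\<in>UNIV. M $ k $ l)"
proof -
  have col: "(transpose fst_incidence ** block_diag (\<lambda>_. M)) $ i $ (a, l)
      = (if i = a then (\<Sum>k\<in>UNIV. M $ k $ l) else 0)" for i a and l :: 'b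
  proof -
    have "(transpose fst_incidence ** block_diag (\<lambda>_. M)) $ i $ (a, l)
        = (\<Sum>b\<in>UNIV. if b = i then (\<Sum>k\<in>UNIV. if i = a then M $ k $ l else 0) else 0)"
      unfolding matrix_matrix_mult_nth sum_UNIV_Times
      by (intro sum.cong refl) (simp add: fst_incidence_nth transpose_def block_diag_def cong: if_cong)
    then show ?thesis
      by simp
  qed
  have "(transpose fst_incidence ** block_diag (\<lambda>_. M) ** fst_incidence) $ i $ j
      = (\<Sum>a\<in>UNIV. if a = i then (if i = j then (\<Sum>l\<in>UNIV. \<Sum>k\<in>UNIV. M $ k $ l) else 0) else 0)"
    for i j :: 'a
    unfolding matrix_matrix_mult_nth[of _ fst_incidence] sum_UNIV_Times
    by (intro sum.cong refl) (simp add: col fst_incidence_nth sum_distrib_right cong: if_cong)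
  then show ?thesis
    by (simp add: vec_eq_iff mat_def sum.swap[of "\<lambda>l k. M $ k $ l"])
qed

lemma det_mat_plus_fst_incidence_conj:
  fixes K :: "real^'a::finite^'a"
  defines "P \<equiv> fst_incidence :: real^'a^('a \<times> 'b::finite)"
  shows "det (mat c + (P ** K) ** transpose P)
    = c ^ (CARD('a) * (CARD('b) - 1)) * det (mat c + real CARD('b) *\<^sub>R K)"
proof -
  have "transpose P ** (P ** K) = real CARD('b) *\<^sub>R K"
    by (simp add: matrix_mul_assoc P_def transpose_fst_incidence_mult mat_matrix_mult)
  moreover have "CARD('a) \<le> CARD('a \<times> 'b)"
    by (simp add: card_prod)
  ultimately show ?thesis
    using Sylvester_det_identity[of c "P ** K" "transpose P"]
    by (simp add: card_prod diff_mult_distrib2)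
qed

section \<open>The Laplacian of the product graph\<close>

definition adjacency :: "('v::finite \<Rightarrow> 'v \<Rightarrow> bool) \<Rightarrow> real^'v^'v" where
  "adjacency E = (\<chi> i j. if E i j then 1 else 0)"

lemma laplacian_regular:
  assumes "regular E r"
  shows "laplacian E = mat (real r) - adjacency E"
  using assms by (simp add: vec_eq_iff laplacian_def adjacency_def mat_def regular_def)

lemma det_mat_plus_scaled_adjacency:
  fixes E :: "'v::finite \<Rightarrow> 'v \<Rightarrow> bool" and mu :: "'v \<Rightarrow> real"
  assumes "regular E r" and mu: "\<And>t. charpoly (laplacian E) t = (\<Prod>i\<in>UNIV. t - mu i)"
    and "s \<noteq> 0"
  shows "det (mat a + s *\<^sub>R adjacency E) = (\<Prod>i\<in>UNIV. a + s * real r - s * mu i)"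
proof -
  define t where "t = (a + s * real r) / s"
  have "mat a + s *\<^sub>R adjacency E = mat s ** (mat t - laplacian E)"
    unfolding mat_matrix_mult laplacian_regular[OF assms(1)] using \<open>s \<noteq> 0\<close>
    by (simp add: t_def vec_eq_iff mat_def field_simps)
  then have "det (mat a + s *\<^sub>R adjacency E) = (\<Prod>i\<in>UNIV. s * (t - mu i))"
    using mu[of t] by (simp add: det_mul det_mat charpoly_def prod.distrib)
  also have "\<dots> = (\<Prod>i\<in>UNIV. a + s * real r - s * mu i)"
    using \<open>s \<noteq> 0\<close> by (intro prod.cong refl) (simp add: t_def field_simps)
  finally show ?thesis .
qed

lemma degree_prod_graph_Inl:
  fixes E1 :: "'a::finite \<Rightarrow> 'a \<Rightarrow> bool" and E2 :: "'b::finite \<Rightarrow> 'b \<Rightarrow> bool"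
  shows "degree (prod_graph E1 E2) (Inl (i, k)) = degree E1 i * CARD('b) + CARD('b)"
proof -
  have "{w. prod_graph E1 E2 (Inl (i, k)) w} = Inl ` ({j. E1 i j} \<times> UNIV) \<union> Inr ` ({i} \<times> UNIV)"
  proof (rule set_eqI)
    fix w :: "('a \<times> 'b) + ('a \<times> 'b)"
    show "w \<in> {w. prod_graph E1 E2 (Inl (i, k)) w} \<longleftrightarrow> w \<in> Inl ` ({j. E1 i j} \<times> UNIV) \<union> Inr ` ({i} \<times> UNIV)"
      by (cases w) auto
  qed
  moreover have "card (Inl ` ({j. E1 i j} \<times> UNIV) \<union> (Inr ` ({i} \<times> UNIV) :: (('a \<times> 'b) + ('a \<times> 'b)) set))
      = card {j. E1 i j} * CARD('b) + CARD('b)"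
    by (subst card_Un_disjoint) (auto simp: card_image card_cartesian_product)
  ultimately show ?thesis
    by (simp add: degree_def)
qed

lemma degree_prod_graph_Inr:
  fixes E1 :: "'a::finite \<Rightarrow> 'a \<Rightarrow> bool" and E2 :: "'b::finite \<Rightarrow> 'b \<Rightarrow> bool"
  shows "degree (prod_graph E1 E2) (Inr (i, k)) = degree E2 k + CARD('b)"
proof -
  have "{w. prod_graph E1 E2 (Inr (i, k)) w} = Inr ` ({i} \<times> {l. E2 k l}) \<union> Inl ` ({i} \<times> UNIV)"
  proof (rule set_eqI)
    fix w :: "('a \<times> 'b) + ('a \<times> 'b)"
    show "w \<in> {w. prod_graph E1 E2 (Inr (i, k)) w} \<longleftrightarrow> w \<in> Inr ` ({i} \<times> {l. E2 k l}) \<union> Inl ` ({i} \<times> UNIV)"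
      by (cases w) auto
  qed
  moreover have "card (Inr ` ({i} \<times> {l. E2 k l}) \<union> (Inl ` ({i} \<times> UNIV) :: (('a \<times> 'b) + ('a \<times> 'b)) set))
      = card {l. E2 k l} + CARD('b)"
    by (subst card_Un_disjoint) (auto simp: card_image card_cartesian_product)
  ultimately show ?thesis
    by (simp add: degree_def)
qed

lemma char_matrix_prod_graph:
  fixes E1 :: "'a::finite \<Rightarrow> 'a \<Rightarrow> bool" and E2 :: "'b::finite \<Rightarrow> 'b \<Rightarrow> bool"
  assumes "regular E1 r1"
  defines "n2 \<equiv> real CARD('b)" and "P \<equiv> fst_incidence :: real^'a^('a \<times> 'b)"
  shows "mat x - laplacian (prod_graph E1 E2) = block_mat
      (mat (x - real r1 * n2 - n2) + P ** adjacency E1 ** transpose P) (P ** transpose P)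
      (P ** transpose P) (block_diag (\<lambda>_. mat (x - n2) - laplacian E2))"
proof (rule block_mat_eqI)
  have P_Pt: "(P ** transpose P) $ p $ q = (if fst p = fst q then 1 else 0)" for p q
    by (simp add: P_def matrix_matrix_mult_nth fst_incidence_nth transpose_def mult_if_delta)
  have r1: "degree E1 i = r1" for i
    using assms(1) by (simp add: regular_def)
  fix p q :: "'a \<times> 'b"
  show "(mat x - laplacian (prod_graph E1 E2)) $ Inl p $ Inl q
      = (mat (x - real r1 * n2 - n2) + P ** adjacency E1 ** transpose P) $ p $ q"
    by (cases p; cases q)
      (auto simp: P_def fst_incidence_conj_nth adjacency_def mat_def laplacian_def
        degree_prod_graph_Inl r1 n2_def algebra_simps)
  show "(mat x - laplacian (prod_graph E1 E2)) $ Inl p $ Inr q = (P ** transpose P) $ p $ q"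
    "(mat x - laplacian (prod_graph E1 E2)) $ Inr p $ Inl q = (P ** transpose P) $ p $ q"
    by (cases p; cases q; simp add: P_Pt mat_def laplacian_def)+
  show "(mat x - laplacian (prod_graph E1 E2)) $ Inr p $ Inr q
      = block_diag (\<lambda>_. mat (x - n2) - laplacian E2) $ p $ q"
    by (cases p; cases q)
      (auto simp: block_diag_def mat_def laplacian_def degree_prod_graph_Inr n2_def)
qed

lemma charpoly_prod_graph_Schur_complement:
  fixes E1 :: "'a::finite \<Rightarrow> 'a \<Rightarrow> bool" and E2 :: "'b::finite \<Rightarrow> 'b \<Rightarrow> bool"
  assumes "regular E1 r1" and "invertible (mat (x - real CARD('b)) - laplacian E2)"
  defines "n2 \<equiv> real CARD('b)" and "P \<equiv> fst_incidence :: real^'a^('a \<times> 'b)"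
  shows "charpoly (laplacian (prod_graph E1 E2)) x = charpoly (laplacian E2) (x - n2) ^ CARD('a)
    * det (mat (x - real r1 * n2 - n2)
        + (P ** (adjacency E1 - mat (coronal (laplacian E2) (x - n2)))) ** transpose P)"
proof -
  define M where "M = mat (x - n2) - laplacian E2"
  define D where "D = block_diag (\<lambda>_::'a. M)"
  define A where "A = mat (x - real r1 * n2 - n2) + P ** adjacency E1 ** transpose P"
  define K where "K = adjacency E1 - mat (coronal (laplacian E2) (x - n2))"
  have "invertible M"
    using assms(2) by (simp add: M_def n2_def)
  then have D_inv: "matrix_inv D = block_diag (\<lambda>_. matrix_inv M)" and "invertible D"
    by (simp_all add: D_def matrix_inv_block_diag invertible_det_nz det_block_diag)
  have "transpose P ** matrix_inv D ** P = mat (coronal (laplacian E2) (x - n2))"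
    unfolding D_inv P_def by (simp add: transpose_fst_incidence_block_diag_const coronal_def M_def)
  then have "P ** transpose P ** matrix_inv D ** (P ** transpose P)
      = P ** mat (coronal (laplacian E2) (x - n2)) ** transpose P"
    by (metis matrix_mul_assoc)
  then have "A - P ** transpose P ** matrix_inv D ** (P ** transpose P)
      = mat (x - real r1 * n2 - n2) + (P ** K) ** transpose P"
    by (simp add: vec_eq_iff A_def P_def fst_incidence_conj_nth K_def)
  moreover have "mat x - laplacian (prod_graph E1 E2) = block_mat A (P ** transpose P) (P ** transpose P) D"
    unfolding A_def D_def M_def n2_def P_def by (rule char_matrix_prod_graph[OF assms(1)])
  moreover have "det D = charpoly (laplacian E2) (x - n2) ^ CARD('a)"
    by (simp add: D_def det_block_diag M_def charpoly_def)
  ultimately show ?thesis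
    unfolding charpoly_def[of "laplacian (prod_graph E1 E2)"] K_def
    by (simp add: det_block_mat_Schur_D[OF \<open>invertible D\<close>])
qed

theorem theorem1:
  fixes E1 :: "'a::finite \<Rightarrow> 'a \<Rightarrow> bool" and E2 :: "'b::finite \<Rightarrow> 'b \<Rightarrow> bool"
    and r1 r2 :: nat and mu :: "'a \<Rightarrow> real" and x :: real
  assumes "simple_graph E1" and "regular E1 r1"
    and "simple_graph E2" and "regular E2 r2"
    and mu: "\<And>t. charpoly (laplacian E1) t = (\<Prod>i\<in>UNIV. (t - mu i))"
    and x: "charpoly (laplacian E2) (x - real CARD('b)) \<noteq> 0"
  shows "charpoly (laplacian (prod_graph E1 E2)) x =
    (x - real r1 * real CARD('b) - real CARD('b)) ^ (CARD('a) * (CARD('b) - 1))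
    * charpoly (laplacian E2) (x - real CARD('b)) ^ CARD('a)
    * (\<Prod>i\<in>UNIV. (x - real CARD('b) - real CARD('b) * mu i
         - real CARD('b) * coronal (laplacian E2) (x - real CARD('b))))"
proof -
  define n2 where "n2 = real CARD('b)"
  define c where "c = x - real r1 * n2 - n2"
  define chi where "chi = coronal (laplacian E2) (x - n2)"
  define P where "P = (fst_incidence :: real^'a^('a \<times> 'b))"
  have "invertible (mat (x - real CARD('b)) - laplacian E2)"
    using x by (simp add: invertible_det_nz charpoly_def)
  then have "charpoly (laplacian (prod_graph E1 E2)) x = charpoly (laplacian E2) (x - n2) ^ CARD('a)
      * det (mat c + (P ** (adjacency E1 - mat chi)) ** transpose P)"
    unfolding n2_def c_def chi_def P_def by (rule charpoly_prod_graph_Schur_complement[OF assms(2)])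
  also have "det (mat c + (P ** (adjacency E1 - mat chi)) ** transpose P)
      = c ^ (CARD('a) * (CARD('b) - 1)) * det (mat (c - n2 * chi) + n2 *\<^sub>R adjacency E1)"
  proof -
    have "mat c + n2 *\<^sub>R (adjacency E1 - mat chi) = mat (c - n2 * chi) + n2 *\<^sub>R adjacency E1"
      by (simp add: vec_eq_iff mat_def algebra_simps)
    then show ?thesis
      unfolding P_def det_mat_plus_fst_incidence_conj n2_def by simp
  qed
  also have "det (mat (c - n2 * chi) + n2 *\<^sub>R adjacency E1)
      = (\<Prod>i\<in>UNIV. c - n2 * chi + n2 * real r1 - n2 * mu i)"
    by (rule det_mat_plus_scaled_adjacency[OF assms(2) mu]) (simp add: n2_def)
  finally show ?thesis
    by (simp add: n2_def c_def chi_def algebra_simps)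
qed

end
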